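(* Let $\tau\ge 0$ be an integer, $\mathcal D=\{0,1,\dots,\tau\}$, let $\{\tau_n\}_{n\in\mathbb Z}$ be an i.i.d. sequence of random variables with values in $\mathcal D$ and $\Pr\{\tau_n=i\}=p_i$ ($\sum_{i=0}^\tau p_i=1$), and let $\alpha_0,\dots,\alpha_\tau$ be real numbers. For integers $k,n$ define $$\omega(k,n)=\begin{cases}\alpha_{k-n}\big[\delta(\tau_n-(k-n))-p_{k-n}\big], & n\le k\le n+\tau,\\ 0,&\text{otherwise},\end{cases}$$ where $\delta$ is the Kronecker delta. For a fixed $n$ define $r(l)=\mathbb E\big\{\sum_{k=-\infty}^{\infty}\omega(k,n)\omega(k+l,n)\big\}$ for $l\in\mathbb Z$ and $S_\Omega(z)=\sum_{l=-\infty}^{\infty} r(l)z^{-l}$. Then $$S_\Omega(z)=\frac12\sum_{i_1,i_2=0}^{\tau}\big(\alpha_{i_1}z^{i_1}-\alpha_{i_2}z^{i_2}\big)\big(\alpha_{i_1}z^{-i_1}-\alpha_{i_2}z^{-i_2}\big)p_{i_1}p_{i_2}.$$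
   Context: $\omega(k,n)$ is the deviation of the (random) impulse response of a channel with random transmission delays from its mean; $S_\Omega$ is called the energy spectral density of the channel uncertainty. *)

theory Defs
  imports "HOL-Probability.Probability"
begin

text \<open>Deviation of the random impulse response from its mean:
  omega(k,n) = alpha_(k-n) [delta(tau_n - (k-n)) - p_(k-n)] for n <= k <= n + T, else 0.
  Here T is the maximal delay, taus n x is the value of tau_n at sample point x.\<close>
definition omega ::
  "nat \<Rightarrow> (nat \<Rightarrow> real) \<Rightarrow> (nat \<Rightarrow> real) \<Rightarrow> (int \<Rightarrow> 'a \<Rightarrow> nat) \<Rightarrow> int \<Rightarrow> int \<Rightarrow> 'a \<Rightarrow> real"
  where
  "omega T alpha p taus k n x =
     (if n \<le> k \<and> k \<le> n + int T
      then alpha (nat (k - n)) * ((if taus n x = nat (k - n) then 1 else 0) - p (nat (k - n)))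
      else 0)"

end

theory Submission
  imports Defs
begin

text \<open>For fixed n, omega(k, n) vanishes unless k = n + i with 0 \<le> i \<le> tau, where it equals
  w_i(tau_n) = alpha_i (delta(tau_n - i) - p_i). Hence r(l) is the sum of E[w_i w_j] over j - i = l,
  and E[w_i w_j] = alpha_i alpha_j (delta_ij p_i - p_i p_j) is a covariance of indicators of tau_n.
  Summing over l gives S(z) = sum_(i,j) alpha_i alpha_j (delta_ij p_i - p_i p_j) z^(i - j). On the other
  side each product expands to alpha_i^2 + alpha_j^2 - alpha_i alpha_j (z^(i - j) + z^(j - i)); weighted
  by p_i p_j and symmetrised in (i, j) this is twice the same expression.\<close>

lemma infsum_double_sum_point_masses:
  fixes g :: "'i \<Rightarrow> 'j \<Rightarrow> 'b::{comm_monoid_add, t2_space}"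
  assumes "finite I" "finite J"
  shows "(\<Sum>\<^sub>\<infinity>k. \<Sum>i\<in>I. \<Sum>j\<in>J. if k = d i j then g i j else 0) = (\<Sum>i\<in>I. \<Sum>j\<in>J. g i j)"
proof -
  let ?K = "(\<Union>i\<in>I. \<Union>j\<in>J. {d i j})"
  have "(\<Sum>\<^sub>\<infinity>k. \<Sum>i\<in>I. \<Sum>j\<in>J. if k = d i j then g i j else 0)
      = (\<Sum>k\<in>?K. \<Sum>i\<in>I. \<Sum>j\<in>J. if k = d i j then g i j else 0)"
    by (intro infsumI has_sum_finite_neutralI) (use assms in \<open>auto intro!: sum.neutral\<close>)
  also have "\<dots> = (\<Sum>i\<in>I. \<Sum>j\<in>J. \<Sum>k\<in>?K. if k = d i j then g i j else 0)"
    by (subst sum.swap) (simp add: sum.swap[of _ ?K])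
  also have "\<dots> = (\<Sum>i\<in>I. \<Sum>j\<in>J. g i j)"
    using assms by (intro sum.cong refl) auto
  finally show ?thesis .
qed

lemma infsum_autocorrelation:
  fixes v :: "nat \<Rightarrow> 'b::{comm_semiring_0, t2_space}"
  assumes "finite I"
  shows "(\<Sum>\<^sub>\<infinity>k::int. (\<Sum>i\<in>I. if k = n + int i then v i else 0)
                       * (\<Sum>j\<in>I. if k + l = n + int j then v j else 0))
       = (\<Sum>i\<in>I. \<Sum>j\<in>I. if l = int j - int i then v i * v j else 0)"
proof -
  have "(\<Sum>i\<in>I. if k = n + int i then v i else 0) * (\<Sum>j\<in>I. if k + l = n + int j then v j else 0)
      = (\<Sum>i\<in>I. \<Sum>j\<in>I. if k = n + int i then (if l = int j - int i then v i * v j else 0) else 0)"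
    for k by (auto simp: sum_product intro!: sum.cong)
  then show ?thesis
    using infsum_double_sum_point_masses[OF assms assms, of "\<lambda>i j. n + int i"] by simp
qed

definition tap_deviation :: "(nat \<Rightarrow> real) \<Rightarrow> (nat \<Rightarrow> real) \<Rightarrow> nat \<Rightarrow> nat \<Rightarrow> real" where
  "tap_deviation alpha p i t = alpha i * ((if t = i then 1 else 0) - p i)"

lemma omega_eq_sum_tap_deviation:
  "omega T alpha p taus k n x = (\<Sum>i\<le>T. if k = n + int i then tap_deviation alpha p i (taus n x) else 0)"
proof (cases "n \<le> k \<and> k \<le> n + int T")
  case True
  then have "(\<Sum>i\<le>T. if k = n + int i then tap_deviation alpha p i (taus n x) else 0)
      = (\<Sum>i\<le>T. if i = nat (k - n) then tap_deviation alpha p i (taus n x) else 0)"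
    by (intro sum.cong) auto
  with True show ?thesis by (simp add: omega_def tap_deviation_def nat_le_iff)
qed (auto simp: omega_def intro!: sum.neutral)

lemma (in prob_space) expectation_comp_bounded_nat_rv:
  fixes X :: "'a \<Rightarrow> nat" and g :: "nat \<Rightarrow> real"
  assumes "X \<in> measurable M (count_space UNIV)" and "\<And>x. x \<in> space M \<Longrightarrow> X x \<le> T"
  shows "expectation (\<lambda>x. g (X x)) = (\<Sum>t\<le>T. g t * prob {x \<in> space M. X x = t})"
proof -
  let ?A = "\<lambda>t. {x \<in> space M. X x = t}"
  have events: "?A t \<in> events" for t
    using measurable_sets[OF assms(1), of "{t}"] by (simp add: vimage_def Int_def conj_commute)
  have "expectation (\<lambda>x. g (X x)) = expectation (\<lambda>x. \<Sum>t\<le>T. g t * indicator (?A t) x)"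
    using assms(2) by (intro Bochner_Integration.integral_cong) (auto simp: indicator_def)
  also have "\<dots> = (\<Sum>t\<le>T. g t * prob (?A t))"
    using events by (subst Bochner_Integration.integral_sum) (auto simp: less_top[symmetric])
  finally show ?thesis .
qed

lemma sum_tap_deviation_product:
  assumes "i \<le> T" "j \<le> T" "(\<Sum>t\<le>T. p t) = 1"
  shows "(\<Sum>t\<le>T. tap_deviation alpha p i t * tap_deviation alpha p j t * p t)
       = alpha i * alpha j * ((if i = j then p i else 0) - p i * p j)"
proof -
  have "tap_deviation alpha p i t * tap_deviation alpha p j t * p t
      = alpha i * alpha j * ((if t = i then if i = j then p i else 0 else 0)
          - (if t = i then p i * p j else 0) - (if t = j then p i * p j else 0) + p i * p j * p t)" for t
    by (simp add: tap_deviation_def algebra_simps)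
  then show ?thesis
    using assms by (simp add: sum.distrib sum_subtractf flip: sum_distrib_left)
qed

lemma (in prob_space) expectation_omega_autocorrelation:
  assumes "taus n \<in> measurable M (count_space UNIV)"
    and "\<And>x. x \<in> space M \<Longrightarrow> taus n x \<le> T"
    and "\<And>i. i \<le> T \<Longrightarrow> prob {x \<in> space M. taus n x = i} = p i"
    and "(\<Sum>i\<le>T. p i) = 1"
  shows "expectation (\<lambda>x. \<Sum>\<^sub>\<infinity>k::int. omega T alpha p taus k n x * omega T alpha p taus (k + l) n x)
       = (\<Sum>i\<le>T. \<Sum>j\<le>T. if l = int j - int i
            then alpha i * alpha j * ((if i = j then p i else 0) - p i * p j) else 0)"
proof -
  let ?w = "tap_deviation alpha p"
  let ?g = "\<lambda>t. \<Sum>i\<le>T. \<Sum>j\<le>T. if l = int j - int i then ?w i t * ?w j t else 0"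
  have "expectation (\<lambda>x. \<Sum>\<^sub>\<infinity>k::int. omega T alpha p taus k n x * omega T alpha p taus (k + l) n x)
      = expectation (\<lambda>x. ?g (taus n x))"
    by (simp only: omega_eq_sum_tap_deviation infsum_autocorrelation[OF finite_atMost])
  also have "\<dots> = (\<Sum>t\<le>T. ?g t * p t)"
    using assms(3) by (simp add: expectation_comp_bounded_nat_rv[OF assms(1,2), where g = ?g])
  also have "\<dots> = (\<Sum>i\<le>T. \<Sum>j\<le>T. \<Sum>t\<le>T. (if l = int j - int i then ?w i t * ?w j t else 0) * p t)"
    by (simp only: sum_distrib_right) (subst sum.swap, rule sum.cong[OF refl], rule sum.swap)
  also have "\<dots> = (\<Sum>i\<le>T. \<Sum>j\<le>T. if l = int j - int i
                     then alpha i * alpha j * ((if i = j then p i else 0) - p i * p j) else 0)"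
    using assms(4) by (intro sum.cong refl) (simp add: sum_tap_deviation_product)
  finally show ?thesis .
qed

lemma product_conjugate_taps:
  fixes z :: "'a::field"
  assumes "z \<noteq> 0"
  shows "(a * z ^ i - b * z ^ j) * (a * z powi (- int i) - b * z powi (- int j))
       = a * a + b * b - a * b * z powi (int i - int j) - a * b * z powi (int j - int i)"
proof -
  have "z ^ m * z powi (- int k) = z powi (int m - int k)" for m k
    using assms by (simp add: power_int_add[symmetric] flip: power_int_of_nat)
  moreover have "(a * z ^ i - b * z ^ j) * (a * z powi (- int i) - b * z powi (- int j))
      = a * a * (z ^ i * z powi (- int i)) + b * b * (z ^ j * z powi (- int j))
        - a * b * (z ^ i * z powi (- int j)) - a * b * (z ^ j * z powi (- int i))"
    by (simp add: algebra_simps)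
  ultimately show ?thesis by simp
qed

lemma covariance_transform_symmetric_form:
  fixes a q :: "nat \<Rightarrow> 'a::field_char_0" and z :: 'a
  assumes "finite I" "(\<Sum>i\<in>I. q i) = 1" "z \<noteq> 0"
  shows "(\<Sum>i\<in>I. \<Sum>j\<in>I. a i * a j * ((if i = j then q i else 0) - q i * q j) * z powi (int i - int j))
       = 1/2 * (\<Sum>i\<in>I. \<Sum>j\<in>I. (a i * z ^ i - a j * z ^ j)
                  * (a i * z powi (- int i) - a j * z powi (- int j)) * q i * q j)"
    (is "?L = 1/2 * ?R")
proof -
  define D where "D = (\<Sum>i\<in>I. a i * a i * q i)"
  define C where "C = (\<Sum>i\<in>I. \<Sum>j\<in>I. a i * a j * q i * q j * z powi (int i - int j))"
  have diagonal: "(\<Sum>i\<in>I. \<Sum>j\<in>I. a i * a i * q i * q j) = D"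
    by (simp add: D_def assms(2) flip: sum_distrib_left)
  have "?L = (\<Sum>i\<in>I. \<Sum>j\<in>I. (if i = j then a i * a i * q i else 0) - a i * a j * q i * q j * z powi (int i - int j))"
    by (intro sum.cong refl) (auto simp: algebra_simps)
  also have "\<dots> = D - C"
    using assms(1) by (simp add: D_def C_def sum_subtractf)
  finally have lhs: "?L = D - C" .
  have "?R = (\<Sum>i\<in>I. \<Sum>j\<in>I. a i * a i * q i * q j) + (\<Sum>i\<in>I. \<Sum>j\<in>I. a j * a j * q i * q j)
        - C - (\<Sum>i\<in>I. \<Sum>j\<in>I. a i * a j * q i * q j * z powi (int j - int i))"
    unfolding product_conjugate_taps[OF assms(3)]
    by (simp add: C_def algebra_simps sum.distrib sum_subtractf)
  also have "\<dots> = D + D - C - C"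
  proof -
    have "(\<Sum>i\<in>I. \<Sum>j\<in>I. a j * a j * q i * q j) = D"
      by (subst sum.swap) (simp add: diagonal[symmetric] mult_ac)
    moreover have "(\<Sum>i\<in>I. \<Sum>j\<in>I. a i * a j * q i * q j * z powi (int j - int i)) = C"
      by (subst sum.swap) (simp add: C_def mult_ac)
    ultimately show ?thesis
      by (simp add: diagonal)
  qed
  finally show ?thesis
    using lhs by simp
qed

theorem lemma2:
  fixes M :: "'a measure"
    and T :: nat
    and taus :: "int \<Rightarrow> 'a \<Rightarrow> nat"
    and p alpha :: "nat \<Rightarrow> real"
    and n :: int
    and z :: complex
  assumes "prob_space M"
    and "\<And>m. taus m \<in> measurable M (count_space UNIV)"
    and "prob_space.indep_vars M (\<lambda>_. count_space UNIV) taus UNIV"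
    and "\<And>m x. x \<in> space M \<Longrightarrow> taus m x \<le> T"
    and "\<And>m i. i \<le> T \<Longrightarrow> prob_space.prob M {x \<in> space M. taus m x = i} = p i"
    and "(\<Sum>i\<le>T. p i) = 1"
    and "z \<noteq> 0"
  shows
    "(\<Sum>\<^sub>\<infinity>l::int. complex_of_real
        (prob_space.expectation M
          (\<lambda>x. \<Sum>\<^sub>\<infinity>k::int. omega T alpha p taus k n x * omega T alpha p taus (k + l) n x))
        * z powi (- l))
     = (1/2) * (\<Sum>i1\<le>T. \<Sum>i2\<le>T.
          (of_real (alpha i1) * z ^ i1 - of_real (alpha i2) * z ^ i2)
        * (of_real (alpha i1) * z powi (- int i1) - of_real (alpha i2) * z powi (- int i2))
        * of_real (p i1) * of_real (p i2))"
proof -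
  interpret prob_space M by (rule assms(1))
  define c where "c i j = alpha i * alpha j * ((if i = j then p i else 0) - p i * p j)" for i j
  \<comment> \<open>\<open>omega _ _ _ taus _ n\<close> depends on \<open>taus n\<close> only.\<close>
  have "(\<Sum>\<^sub>\<infinity>l::int. complex_of_real
          (expectation (\<lambda>x. \<Sum>\<^sub>\<infinity>k::int. omega T alpha p taus k n x * omega T alpha p taus (k + l) n x))
          * z powi (- l))
      = (\<Sum>\<^sub>\<infinity>l::int. \<Sum>i\<le>T. \<Sum>j\<le>T. if l = int j - int i then of_real (c i j) * z powi (int i - int j) else 0)"
    using expectation_omega_autocorrelation[OF assms(2,4,5,6)] unfolding c_def
    by (intro infsum_cong) (auto simp: sum_distrib_right intro!: sum.cong)
  also have "\<dots> = (\<Sum>i\<le>T. \<Sum>j\<le>T. of_real (c i j) * z powi (int i - int j))"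
    by (simp add: infsum_double_sum_point_masses)
  also have "\<dots> = (\<Sum>i\<le>T. \<Sum>j\<le>T. of_real (alpha i) * of_real (alpha j)
                 * ((if i = j then of_real (p i) else 0) - of_real (p i) * of_real (p j)) * z powi (int i - int j))"
    by (intro sum.cong refl) (simp add: c_def)
  moreover have "(\<Sum>i\<le>T. complex_of_real (p i)) = 1"
    using assms(6) by (metis of_real_1 of_real_sum)
  ultimately show ?thesis
    using covariance_transform_symmetric_form[where I = "{..T}" and z = z
        and q = "\<lambda>i. of_real (p i)" and a = "\<lambda>i. of_real (alpha i)"] assms(7)
    by simp
qed

end
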